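(* Let $X=\prod_{i=1}^N X_i$ with $X_i\subseteq\mathbb R^{n_i}$, $n=\sum_i n_i$, let $\epsilon=(\epsilon_1,\dots,\epsilon_N)$ with all $\epsilon_i>0$, and let $X_c^\epsilon\triangleq X+\prod_{i=1}^N C_{n_i}(0,\epsilon_i)$. Let $F=(F_1;\dots;F_N):X_c^\epsilon\to\mathbb R^n$ and suppose there are constants $C_i'>0$ with $\|F_i(x)\|\le C_i'$ for all $x\in X_c^\epsilon$ and all $i$; set $C'=(C_1',\dots,C_N')$. Let $z=(z_1;\dots;z_N)$ where the $z_i$ are independent and $z_i$ is uniformly distributed on $C_{n_i}(0,\epsilon_i)$, and define $F^\epsilon(x)\triangleq(\mathsf E[F_1(x+z)];\dots;\mathsf E[F_N(x+z)])$ for $x\in X$. Then: (a) $\|F^\epsilon(x)\|\le\|C'\|$ for all $x\in X$; (b) for all $x,y\in X$, $\|F^\epsilon(x)-F^\epsilon(y)\|\le\dfrac{\sqrt n\,\|C'\|}{\min_{j=1,\dots,N}\epsilon_j}\|x-y\|$.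
   Context: $C_m(x,\rho)=\{y\in\mathbb R^m:\|y-x\|_\infty\le\rho\}$ is the cube centered at $x$ with edge length $2\rho$ and edges along the coordinate axes. $F$ is assumed (Borel) measurable so that the expectations are defined. *)

theory Defs
  imports "HOL-Probability.Probability"
begin

text \<open>R^n is real^'n; the coordinates are partitioned into blocks by blk :: 'n => 'b,
  block i corresponding to R^(n_i).\<close>

definition block_coords :: "('n \<Rightarrow> 'b) \<Rightarrow> 'b \<Rightarrow> 'n set" where
  "block_coords blk i = {k. blk k = i}"

definition block_part :: "('n \<Rightarrow> 'b) \<Rightarrow> 'b \<Rightarrow> real^'n \<Rightarrow> ('n \<Rightarrow> real)" where
  "block_part blk i x = restrict (\<lambda>k. x $ k) (block_coords blk i)"

definition block_norm :: "('n::finite \<Rightarrow> 'b) \<Rightarrow> 'b \<Rightarrow> real^'n \<Rightarrow> real" where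
  "block_norm blk i v = sqrt (\<Sum>k\<in>block_coords blk i. (v $ k)^2)"

definition cube_prod :: "('n \<Rightarrow> 'b) \<Rightarrow> ('b \<Rightarrow> real) \<Rightarrow> (real^'n) set" where
  "cube_prod blk eps = {z. \<forall>k. \<bar>z $ k\<bar> \<le> eps (blk k)}"

definition enlarged :: "(real^'n) set \<Rightarrow> ('n \<Rightarrow> 'b) \<Rightarrow> ('b \<Rightarrow> real) \<Rightarrow> (real^'n) set" where
  "enlarged X blk eps = {x + z | x z. x \<in> X \<and> z \<in> cube_prod blk eps}"

text \<open>F^eps(x) = E[F(x+z)], z uniform on the product of cubes (equivalently: independent
  uniform z_i on the cubes).\<close>
definition smoothed :: "(real^'n::finite \<Rightarrow> real^'n) \<Rightarrow> ('n \<Rightarrow> 'b) \<Rightarrow> ('b \<Rightarrow> real) \<Rightarrow> real^'n \<Rightarrow> real^'n" where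
  "smoothed F blk eps x =
     integral\<^sup>L (uniform_measure lborel (cube_prod blk eps)) (\<lambda>z. F (x + z))"

end

theory Submission
  imports Defs
begin

text \<open>
  The smoothed map is the average of F over the box centred at x with half-edges eps (blk k),
  of volume P = \<Prod>k. 2 eps (blk k). Summing the block bounds gives norm (F w) \<le> norm C' on the
  enlarged set, so (a) holds for any average. For (b), the difference of the averages at x and y
  is 1/P times the difference of the integrals over the two boxes, bounded by norm C' times the
  volume of their symmetric difference. Their intersection is a box with edges
  2 eps (blk k) (1 - t k), t k = \<bar>x k - y k\<bar> / (2 eps (blk k)), and 1 - \<Prod>k. (1 - t k) \<le> \<Sum>k. t k
  bounds the relative volume of the symmetric difference by \<Sum>k. \<bar>x k - y k\<bar> / eps (blk k),
  which is at most sqrt n norm (x - y) / min eps by Cauchy-Schwarz.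
\<close>

lemma one_minus_prod_one_minus_le_sum:
  fixes t :: "'a \<Rightarrow> real"
  assumes "finite S" and "\<And>k. k \<in> S \<Longrightarrow> 0 \<le> t k \<and> t k \<le> 1"
  shows "1 - (\<Prod>k\<in>S. 1 - t k) \<le> (\<Sum>k\<in>S. t k)"
  using assms
proof (induction S rule: finite_induct)
  case empty
  then show ?case by simp
next
  case (insert a S)
  define Q where "Q = (\<Prod>k\<in>S. 1 - t k)"
  have "0 \<le> Q" "Q \<le> 1"
    using insert.prems by (auto simp: Q_def intro!: prod_nonneg prod_le_1)
  moreover have "0 \<le> t a" "t a \<le> 1"
    using insert.prems by auto
  ultimately have "t a * Q \<le> t a"
    by (simp add: mult_left_le)
  moreover have "1 - Q \<le> (\<Sum>k\<in>S. t k)"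
    using insert by (simp add: Q_def)
  ultimately show ?case
    using insert.hyps by (simp add: Q_def[symmetric] algebra_simps)
qed

lemma sum_abs_le_sqrt_card_mult_norm_cart:
  fixes v :: "real^'n"
  shows "(\<Sum>k\<in>UNIV. \<bar>v$k\<bar>) \<le> sqrt (real CARD('n)) * norm v"
proof -
  have "norm v = L2_set (\<lambda>k. v$k) UNIV"
    by (simp add: norm_vec_def L2_set_def)
  then show ?thesis
    using L2_set_mult_ineq[of "\<lambda>k. v$k" "\<lambda>_. 1" UNIV]
    by (simp add: L2_set_constant mult.commute)
qed

lemma norm_power2_eq_sum_block_norm_power2:
  fixes blk :: "'n::finite \<Rightarrow> 'b::finite" and v :: "real^'n"
  shows "(norm v)^2 = (\<Sum>i\<in>UNIV. (block_norm blk i v)^2)"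
proof -
  have "(norm v)^2 = (\<Sum>k\<in>UNIV. (v$k)^2)"
    unfolding norm_vec_def L2_set_def by (simp add: sum_nonneg)
  also have "\<dots> = (\<Sum>i\<in>UNIV. \<Sum>k\<in>block_coords blk i. (v$k)^2)"
    using sum.group[of UNIV UNIV blk "\<lambda>k. (v$k)^2"] by (simp add: block_coords_def)
  also have "\<dots> = (\<Sum>i\<in>UNIV. (block_norm blk i v)^2)"
    by (simp add: block_norm_def sum_nonneg)
  finally show ?thesis .
qed

lemma norm_le_sqrt_sum_power2_if_block_norm_le:
  fixes blk :: "'n::finite \<Rightarrow> 'b::finite" and v :: "real^'n"
  assumes "\<And>i. block_norm blk i v \<le> C i"
  shows "norm v \<le> sqrt (\<Sum>i\<in>UNIV. (C i)^2)"
proof -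
  have "(norm v)^2 \<le> (\<Sum>i\<in>UNIV. (C i)^2)"
    unfolding norm_power2_eq_sum_block_norm_power2[of v blk]
    using assms by (intro sum_mono power_mono) (auto simp: block_norm_def sum_nonneg)
  then show ?thesis
    by (simp add: real_le_rsqrt)
qed

lemma measure_lborel_cbox_centered_cart:
  fixes x e :: "real^'n"
  assumes "\<And>k. 0 \<le> e$k"
  shows "measure lborel (cbox (x - e) (x + e)) = (\<Prod>k\<in>UNIV. 2 * e$k)"
proof -
  have "x \<in> cbox (x - e) (x + e)"
    using assms by (simp add: mem_box_cart)
  then have "cbox (x - e) (x + e) \<noteq> {}"
    by blast
  then show ?thesis
    by (simp add: content_cbox_cart)
qed

lemma measure_cbox_centered_diff_inter_le:
  fixes x y e :: "real^'n"
  assumes e_pos: "\<And>k. 0 < e$k"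
  shows "measure lborel (cbox (x - e) (x + e))
           - measure lborel (cbox (x - e) (x + e) \<inter> cbox (y - e) (y + e))
         \<le> measure lborel (cbox (x - e) (x + e)) * (\<Sum>k\<in>UNIV. \<bar>x$k - y$k\<bar> / (2 * e$k))"
proof -
  define P where "P = (\<Prod>k\<in>UNIV. 2 * e$k)"
  define t where "t k = \<bar>x$k - y$k\<bar> / (2 * e$k)" for k
  have measure_box: "measure lborel (cbox (x - e) (x + e)) = P"
    using e_pos by (simp add: P_def measure_lborel_cbox_centered_cart less_imp_le)
  have "0 < P"
    using e_pos by (simp add: P_def prod_pos)
  have t_nonneg: "0 \<le> t k" for k
    using e_pos[of k] by (simp add: t_def)
  consider (near) "\<forall>k. t k \<le> 1" | (far) k where "1 < t k"
    by (meson not_le)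
  then have "P - measure lborel (cbox (x - e) (x + e) \<inter> cbox (y - e) (y + e)) \<le> P * (\<Sum>k\<in>UNIV. t k)"
  proof cases
    case near
    define lo :: "real^'n" where "lo = (\<chi> k. max (x$k - e$k) (y$k - e$k))"
    define hi :: "real^'n" where "hi = (\<chi> k. min (x$k + e$k) (y$k + e$k))"
    have inter: "cbox (x - e) (x + e) \<inter> cbox (y - e) (y + e) = cbox lo hi"
      by (auto simp: mem_box_cart lo_def hi_def)
    have width: "hi$k - lo$k = 2 * e$k * (1 - t k)" for k
      using e_pos[of k] by (simp add: hi_def lo_def t_def field_simps abs_if max_def min_def)
    have "0 \<le> hi$k - lo$k" for k
      unfolding width using near e_pos[of k] by simp
    then have "lo \<in> cbox lo hi"
      by (simp add: mem_box_cart)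
    then have "measure lborel (cbox lo hi) = (\<Prod>k\<in>UNIV. 2 * e$k * (1 - t k))"
      by (subst content_cbox_cart) (auto simp: width)
    also have "\<dots> = P * (\<Prod>k\<in>UNIV. 1 - t k)"
      by (simp add: P_def prod.distrib)
    finally have "P - measure lborel (cbox lo hi) = P * (1 - (\<Prod>k\<in>UNIV. 1 - t k))"
      by (simp add: algebra_simps)
    also have "\<dots> \<le> P * (\<Sum>k\<in>UNIV. t k)"
      using \<open>0 < P\<close> near t_nonneg
      by (intro mult_left_mono one_minus_prod_one_minus_le_sum) auto
    finally show ?thesis
      by (simp add: inter)
  next
    case far
    have "t k \<le> (\<Sum>k\<in>UNIV. t k)"
      using t_nonneg by (intro member_le_sum) auto
    then have "P \<le> P * (\<Sum>k\<in>UNIV. t k)"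
      using far \<open>0 < P\<close> by simp
    then show ?thesis
      using measure_nonneg[of lborel "cbox (x - e) (x + e) \<inter> cbox (y - e) (y + e)"] by linarith
  qed
  then show ?thesis
    by (simp add: measure_box t_def)
qed

lemma lborel_integral_translate:
  fixes g :: "'a::euclidean_space \<Rightarrow> 'b::{banach, second_countable_topology}"
  assumes "g \<in> borel_measurable borel"
  shows "(\<integral>z. g (x + z) \<partial>lborel) = (\<integral>w. g w \<partial>lborel)"
proof -
  have "(\<integral>w. g w \<partial>lborel) = (\<integral>w. g w \<partial>distr lborel borel ((+) x))"
    by (simp add: lborel_distr_plus)
  also have "\<dots> = (\<integral>z. g (x + z) \<partial>lborel)"
    using assms by (intro integral_distr) auto
  finally show ?thesis ..
qed

lemma integral_uniform_measure_translate:
  fixes f :: "'a::euclidean_space \<Rightarrow> 'b::{banach, second_countable_topology}"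
  assumes S: "S \<in> sets lborel" "emeasure lborel S \<noteq> 0" "emeasure lborel S \<noteq> \<infinity>"
    and f: "f \<in> borel_measurable borel"
  shows "(\<integral>z. f (x + z) \<partial>uniform_measure lborel S)
           = (1 / measure lborel S) *\<^sub>R (LINT w:(+) x ` S|lborel. f w)"
proof -
  define m where "m = measure lborel S"
  have "0 < m"
    using S by (simp add: m_def emeasure_eq_ennreal_measure zero_less_measure_iff)
  have translate_eq: "(+) x ` S = (\<lambda>w. w - x) -` S"
    by force
  have [measurable]: "(+) x ` S \<in> sets borel"
    unfolding translate_eq using S measurable_sets[of "\<lambda>w. w - x" borel borel S] by simp
  have "(\<lambda>z. indicator S z / emeasure lborel S) = (\<lambda>z. ennreal (indicator S z / m))"
    using S \<open>0 < m\<close>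
    by (auto simp: m_def emeasure_eq_ennreal_measure divide_ennreal ennreal_1[symmetric]
        simp del: ennreal_1 split: split_indicator)
  then have "(\<integral>z. f (x + z) \<partial>uniform_measure lborel S) = (\<integral>z. (indicator S z / m) *\<^sub>R f (x + z) \<partial>lborel)"
    unfolding uniform_measure_def using S f \<open>0 < m\<close>
    by (simp only:) (subst integral_density, auto)
  also have "\<dots> = (1 / m) *\<^sub>R (\<integral>z. indicator S z *\<^sub>R f (x + z) \<partial>lborel)"
    by (simp flip: integral_scaleR_right)
  also have "(\<integral>z. indicator S z *\<^sub>R f (x + z) \<partial>lborel) = (LINT w:(+) x ` S|lborel. f w)"
  proof -
    have meas: "(\<lambda>w. indicator ((+) x ` S) w *\<^sub>R f w) \<in> borel_measurable borel"
      using f by measurable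
    have "indicator S z = (indicator ((+) x ` S) (x + z) :: real)" for z
      by (simp add: indicator_def translate_eq)
    then show ?thesis
      using lborel_integral_translate[OF meas, of x] unfolding set_lebesgue_integral_def by simp
  qed
  finally show ?thesis
    by (simp add: m_def)
qed

lemma norm_set_integral_le_measure:
  fixes f :: "'a \<Rightarrow> 'b::{banach, second_countable_topology}"
  assumes A: "A \<in> sets M" "emeasure M A < \<infinity>"
    and f: "f \<in> borel_measurable M"
    and bound: "\<And>w. w \<in> A \<Longrightarrow> norm (f w) \<le> C"
  shows "norm (LINT w:A|M. f w) \<le> C * measure M A"
proof -
  have "set_integrable M A f"
    unfolding set_integrable_def
    using A f bound by (intro integrableI_bounded_set_indicator[where B=C]) auto
  then have "norm (LINT w:A|M. f w) \<le> (LINT w:A|M. norm (f w))"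
    by (rule set_integral_norm_bound)
  also have "\<dots> \<le> (LINT w:A|M. C)"
    using A \<open>set_integrable M A f\<close> bound
    by (intro set_integral_mono set_integrable_norm)
      (auto simp: set_integrable_def integrable_indicator_iff)
  also have "\<dots> = C * measure M A"
    using A by (simp add: set_integral_const)
  finally show ?thesis .
qed

lemma norm_set_integral_diff_le:
  fixes f :: "'a \<Rightarrow> 'b::{banach, second_countable_topology}"
  assumes sets: "A \<in> sets M" "B \<in> sets M"
    and finite: "emeasure M A < \<infinity>" "emeasure M B < \<infinity>"
    and f: "f \<in> borel_measurable M"
    and bound: "\<And>w. w \<in> A \<union> B \<Longrightarrow> norm (f w) \<le> C"
  shows "norm ((LINT w:A|M. f w) - (LINT w:B|M. f w))
           \<le> C * (measure M A + measure M B - 2 * measure M (A \<inter> B))"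
proof -
  have int_A: "integrable M (\<lambda>w. indicator A w *\<^sub>R f w)"
    using sets finite f bound by (intro integrableI_bounded_set_indicator[where B=C]) auto
  have int_B: "integrable M (\<lambda>w. indicator B w *\<^sub>R f w)"
    using sets finite f bound by (intro integrableI_bounded_set_indicator[where B=C]) auto
  have "emeasure M (A \<inter> B) < \<infinity>"
    using finite(1) emeasure_mono[of "A \<inter> B" A M] sets by (simp add: le_less_trans)
  then have int_ind: "integrable M (indicator S :: _ \<Rightarrow> real)" if "S \<in> {A, B, A \<inter> B}" for S
    using that sets finite by (auto simp: integrable_indicator_iff Int_absorb1 sets.sets_into_space)
  have pointwise: "norm (indicator A w *\<^sub>R f w - indicator B w *\<^sub>R f w)
      \<le> C * indicator A w + C * indicator B w - 2 * C * indicator (A \<inter> B) w" for w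
    using bound[of w] by (cases "w \<in> A"; cases "w \<in> B") auto
  have "norm ((LINT w:A|M. f w) - (LINT w:B|M. f w))
      = norm (\<integral>w. indicator A w *\<^sub>R f w - indicator B w *\<^sub>R f w \<partial>M)"
    using int_A int_B by (simp add: set_lebesgue_integral_def)
  also have "\<dots> \<le> (\<integral>w. norm (indicator A w *\<^sub>R f w - indicator B w *\<^sub>R f w) \<partial>M)"
    by (rule integral_norm_bound)
  also have "\<dots> \<le> (\<integral>w. C * indicator A w + C * indicator B w - 2 * C * indicator (A \<inter> B) w \<partial>M)"
    using int_A int_B int_ind pointwise by (intro integral_mono) auto
  also have "\<dots> = C * (measure M A + measure M B - 2 * measure M (A \<inter> B))"
    using int_ind sets by (simp add: algebra_simps Int_assoc sets.Int_space_eq2)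
  finally show ?thesis .
qed

lemma sum_abs_div_le_sqrt_card_mult_norm_div_Min:
  fixes v :: "real^'n" and blk :: "'n \<Rightarrow> 'b::finite"
  assumes eps: "\<And>i. 0 < eps i"
  shows "(\<Sum>k\<in>UNIV. \<bar>v$k\<bar> / eps (blk k)) \<le> sqrt (real CARD('n)) * norm v / Min (range eps)"
proof -
  have "Min (range eps) \<in> range eps"
    by (intro Min_in) auto
  then have Min_pos: "0 < Min (range eps)"
    using eps by auto
  have "(\<Sum>k\<in>UNIV. \<bar>v$k\<bar> / eps (blk k)) \<le> (\<Sum>k\<in>UNIV. \<bar>v$k\<bar> / Min (range eps))"
    using eps Min_pos by (intro sum_mono divide_left_mono) auto
  also have "\<dots> = (\<Sum>k\<in>UNIV. \<bar>v$k\<bar>) / Min (range eps)"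
    by (simp add: sum_divide_distrib)
  also have "\<dots> \<le> sqrt (real CARD('n)) * norm v / Min (range eps)"
    using sum_abs_le_sqrt_card_mult_norm_cart[of v] less_imp_le[OF Min_pos] by (rule divide_right_mono)
  finally show ?thesis .
qed

definition cube_radii :: "('n \<Rightarrow> 'b) \<Rightarrow> ('b \<Rightarrow> real) \<Rightarrow> real^'n::finite" where
  "cube_radii blk eps = (\<chi> k. eps (blk k))"

lemma cube_prod_eq_cbox: "cube_prod blk eps = cbox (- cube_radii blk eps) (cube_radii blk eps)"
  by (auto simp: cube_prod_def cube_radii_def mem_box_cart abs_le_iff minus_le_iff)

lemma cbox_centered_subset_enlarged:
  assumes "x \<in> X"
  shows "cbox (x - cube_radii blk eps) (x + cube_radii blk eps) \<subseteq> enlarged X blk eps"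
proof
  fix w
  assume "w \<in> cbox (x - cube_radii blk eps) (x + cube_radii blk eps)"
  then have "w - x \<in> cube_prod blk eps"
    by (auto simp: cube_prod_eq_cbox mem_box_cart algebra_simps)
  then show "w \<in> enlarged X blk eps"
    unfolding enlarged_def using assms by (intro CollectI exI[of _ x] exI[of _ "w - x"]) auto
qed

lemma smoothed_eq_set_integral_cbox:
  fixes F :: "real^'n::finite \<Rightarrow> real^'n" and blk :: "'n \<Rightarrow> 'b" and eps :: "'b \<Rightarrow> real"
  defines "r \<equiv> cube_radii blk eps"
  assumes eps: "\<And>i. 0 < eps i" and F: "F \<in> borel_measurable borel"
  shows "smoothed F blk eps x
           = (1 / (\<Prod>k\<in>UNIV. 2 * eps (blk k))) *\<^sub>R (LINT w:cbox (x - r) (x + r)|lborel. F w)"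
proof -
  have measure_cube: "measure lborel (cbox (-r) r) = (\<Prod>k\<in>UNIV. 2 * eps (blk k))"
    using measure_lborel_cbox_centered_cart[of r 0] eps
    by (simp add: r_def cube_radii_def less_imp_le)
  have finite: "emeasure lborel (cbox (-r) r) < \<infinity>"
    by (rule emeasure_lborel_cbox_finite)
  have "emeasure lborel (cbox (-r) r) = ennreal (\<Prod>k\<in>UNIV. 2 * eps (blk k))"
    using finite measure_cube by (simp add: emeasure_eq_ennreal_measure)
  moreover have "0 < (\<Prod>k\<in>UNIV. 2 * eps (blk k))"
    using eps by (simp add: prod_pos)
  ultimately have nonnull: "emeasure lborel (cbox (-r) r) \<noteq> 0"
    by (simp only: ennreal_eq_0_iff not_le)
  have "(+) x ` cbox (-r) r = cbox (x - r) (x + r)"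
    using cbox_translation[of x "-r" r] by simp
  then show ?thesis
    unfolding smoothed_def cube_prod_eq_cbox r_def[symmetric]
    using integral_uniform_measure_translate[of "cbox (-r) r" F x] F finite nonnull measure_cube
    by simp
qed

lemma norm_smoothed_le:
  fixes F :: "real^'n::finite \<Rightarrow> real^'n" and blk :: "'n \<Rightarrow> 'b" and eps :: "'b \<Rightarrow> real"
  defines "r \<equiv> cube_radii blk eps"
  assumes eps: "\<And>i. 0 < eps i" and F: "F \<in> borel_measurable borel"
    and bound: "\<And>w. w \<in> cbox (x - r) (x + r) \<Longrightarrow> norm (F w) \<le> C"
  shows "norm (smoothed F blk eps x) \<le> C"
proof -
  define P where "P = (\<Prod>k\<in>UNIV. 2 * eps (blk k))"
  have "0 < P"
    using eps by (simp add: P_def prod_pos)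
  have measure_box: "measure lborel (cbox (x - r) (x + r)) = P"
    using eps by (simp add: P_def r_def cube_radii_def measure_lborel_cbox_centered_cart less_imp_le)
  have "norm (smoothed F blk eps x) = norm (LINT w:cbox (x - r) (x + r)|lborel. F w) / P"
    using eps F \<open>0 < P\<close> by (simp add: smoothed_eq_set_integral_cbox r_def P_def)
  also have "\<dots> \<le> C * P / P"
    using \<open>0 < P\<close> F bound measure_box emeasure_lborel_cbox_finite
    by (intro divide_right_mono norm_set_integral_le_measure[THEN order_trans]) auto
  also have "\<dots> = C"
    using \<open>0 < P\<close> by simp
  finally show ?thesis .
qed

lemma norm_smoothed_diff_le:
  fixes F :: "real^'n::finite \<Rightarrow> real^'n" and blk :: "'n \<Rightarrow> 'b" and eps :: "'b \<Rightarrow> real"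
  defines "r \<equiv> cube_radii blk eps"
  assumes eps: "\<And>i. 0 < eps i" and F: "F \<in> borel_measurable borel"
    and bound: "\<And>w. w \<in> cbox (x - r) (x + r) \<union> cbox (y - r) (y + r) \<Longrightarrow> norm (F w) \<le> C"
  shows "norm (smoothed F blk eps x - smoothed F blk eps y)
           \<le> C * (\<Sum>k\<in>UNIV. \<bar>x$k - y$k\<bar> / eps (blk k))"
proof -
  define P where "P = (\<Prod>k\<in>UNIV. 2 * eps (blk k))"
  define Q where "Q = measure lborel (cbox (x - r) (x + r) \<inter> cbox (y - r) (y + r))"
  have "0 < P"
    using eps by (simp add: P_def prod_pos)
  have r_pos: "0 < r$k" for k
    using eps by (simp add: r_def cube_radii_def)
  have measure_box: "measure lborel (cbox (z - r) (z + r)) = P" for z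
    using r_pos by (simp add: P_def r_def cube_radii_def measure_lborel_cbox_centered_cart less_imp_le)
  have "x \<in> cbox (x - r) (x + r)"
    using r_pos by (simp add: mem_box_cart less_imp_le)
  then have "0 \<le> C"
    using bound by (meson UnI1 norm_ge_zero order_trans)
  have "norm (smoothed F blk eps x - smoothed F blk eps y)
      = norm ((LINT w:cbox (x - r) (x + r)|lborel. F w) - (LINT w:cbox (y - r) (y + r)|lborel. F w)) / P"
    using eps F \<open>0 < P\<close>
    by (simp add: smoothed_eq_set_integral_cbox r_def P_def flip: scaleR_diff_right)
  also have "\<dots> \<le> C * (P + P - 2 * Q) / P"
    using \<open>0 < P\<close> F bound measure_box emeasure_lborel_cbox_finite
    by (intro divide_right_mono norm_set_integral_diff_le[THEN order_trans]) (auto simp: Q_def)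
  also have "\<dots> = 2 * C * ((P - Q) / P)"
    by (simp add: field_simps)
  also have "\<dots> \<le> 2 * C * (\<Sum>k\<in>UNIV. \<bar>x$k - y$k\<bar> / (2 * r$k))"
    using measure_cbox_centered_diff_inter_le[OF r_pos, of x y] measure_box \<open>0 < P\<close> \<open>0 \<le> C\<close>
    by (intro mult_left_mono) (auto simp: Q_def pos_divide_le_eq mult.commute)
  also have "\<dots> = C * (\<Sum>k\<in>UNIV. \<bar>x$k - y$k\<bar> / eps (blk k))"
    by (simp add: r_def cube_radii_def sum_distrib_left)
  finally show ?thesis .
qed

theorem proposition7:
  fixes blk :: "'n::finite \<Rightarrow> 'b::finite"
    and Xs :: "'b \<Rightarrow> ('n \<Rightarrow> real) set"
    and X :: "(real^'n) set"
    and eps Cp :: "'b \<Rightarrow> real"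
    and F :: "real^'n \<Rightarrow> real^'n"
  assumes X_prod: "X = {x. \<forall>i. block_part blk i x \<in> Xs i}"
    and eps_pos: "\<forall>i. eps i > 0"
    and Cp_pos: "\<forall>i. Cp i > 0"
    and F_meas: "F \<in> borel_measurable borel"
    and F_bound: "\<forall>x\<in>enlarged X blk eps. \<forall>i. block_norm blk i (F x) \<le> Cp i"
  shows "(\<forall>x\<in>X. norm (smoothed F blk eps x) \<le> sqrt (\<Sum>i\<in>UNIV. (Cp i)^2))
       \<and> (\<forall>x\<in>X. \<forall>y\<in>X. norm (smoothed F blk eps x - smoothed F blk eps y)
            \<le> sqrt (real CARD('n)) * sqrt (\<Sum>i\<in>UNIV. (Cp i)^2) / Min (range eps) * norm (x - y))"
proof -
  define B where "B = sqrt (\<Sum>i\<in>UNIV. (Cp i)^2)"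
  have eps: "\<And>i. 0 < eps i"
    using eps_pos by blast
  have F_le: "norm (F w) \<le> B"
    if "x \<in> X" "w \<in> cbox (x - cube_radii blk eps) (x + cube_radii blk eps)" for x w
    using F_bound cbox_centered_subset_enlarged[OF that(1)] that(2)
    unfolding B_def by (blast intro: norm_le_sqrt_sum_power2_if_block_norm_le)
  show ?thesis
  proof (intro conjI ballI)
    fix x assume "x \<in> X"
    then show "norm (smoothed F blk eps x) \<le> sqrt (\<Sum>i\<in>UNIV. (Cp i)^2)"
      using norm_smoothed_le[where blk=blk and eps=eps, OF eps F_meas] F_le unfolding B_def by blast
  next
    fix x y assume "x \<in> X" "y \<in> X"
    then have "norm (smoothed F blk eps x - smoothed F blk eps y)
        \<le> B * (\<Sum>k\<in>UNIV. \<bar>x$k - y$k\<bar> / eps (blk k))"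
      by (intro norm_smoothed_diff_le[where blk=blk and eps=eps, OF eps F_meas])
        (auto intro: F_le)
    also have "\<dots> \<le> B * (sqrt (real CARD('n)) * norm (x - y) / Min (range eps))"
      using sum_abs_div_le_sqrt_card_mult_norm_div_Min[where eps=eps and blk=blk and v="x - y", OF eps]
      by (intro mult_left_mono) (simp_all add: B_def sum_nonneg)
    finally show "norm (smoothed F blk eps x - smoothed F blk eps y)
        \<le> sqrt (real CARD('n)) * sqrt (\<Sum>i\<in>UNIV. (Cp i)^2) / Min (range eps) * norm (x - y)"
      by (simp add: B_def mult_ac)
  qed
qed

end
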